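(* Let $R$ be an associative ring (not necessarily unital) which is solvable in the sense below. If there is an associative ring $S$ with $[S,S]\cong R$, then $R$ is nilpotent, i.e. $R^m=0$ for some $m$ (all products of $m$ elements of $R$ vanish). In particular, a nonzero commutative ring with identity is not isomorphic to $[S,S]$ for any associative ring $S$.
   Context: For an associative ring $R$, $[R,R]$ denotes the two-sided ideal of $R$ generated by all Lie commutators $xy-yx$, $x,y\in R$. Define $\delta^{(0)}(R)=R$ and $\delta^{(n)}(R)$ to be the two-sided ideal of $R$ generated by all commutators $ab-ba$ with $a,b\in\delta^{(n-1)}(R)$. $R$ is called solvable (in the sense of Jennings) if $\delta^{(n)}(R)=0$ for some $n$. *)

theory Defs
  imports Main
begin

inductive_set ideal_gen :: "'a::ring set \<Rightarrow> 'a set" for A :: "'a set" where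
  base: "a \<in> A \<Longrightarrow> a \<in> ideal_gen A"
| zero: "0 \<in> ideal_gen A"
| diff: "x \<in> ideal_gen A \<Longrightarrow> y \<in> ideal_gen A \<Longrightarrow> x - y \<in> ideal_gen A"
| lmult: "x \<in> ideal_gen A \<Longrightarrow> r * x \<in> ideal_gen A"
| rmult: "x \<in> ideal_gen A \<Longrightarrow> x * r \<in> ideal_gen A"

definition comm_ideal :: "'a::ring set" where
  "comm_ideal = ideal_gen {x * y - y * x | x y. True}"

text \<open>Jennings' derived series delta^(n)(R) (ideals of the whole ring R).\<close>
primrec delta :: "nat \<Rightarrow> 'a::ring set" where
  "delta 0 = UNIV"
| "delta (Suc n) = ideal_gen {a * b - b * a | a b. a \<in> delta n \<and> b \<in> delta n}"

definition solvable_ring :: "'a::ring itself \<Rightarrow> bool" where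
  "solvable_ring _ \<longleftrightarrow> (\<exists>n. delta n = ({0} :: 'a set))"

text \<open>Product x 0 * x 1 * ... * x n of n+1 elements.\<close>
primrec prodn :: "(nat \<Rightarrow> 'a::ring) \<Rightarrow> nat \<Rightarrow> 'a" where
  "prodn x 0 = x 0"
| "prodn x (Suc n) = prodn x n * x (Suc n)"

definition nilpotent_ring :: "'a::ring itself \<Rightarrow> bool" where
  "nilpotent_ring _ \<longleftrightarrow> (\<exists>m. \<forall>x :: nat \<Rightarrow> 'a. prodn x m = 0)"

definition iso_onto_comm_ideal :: "('a::ring \<Rightarrow> 'b::ring) \<Rightarrow> bool" where
  "iso_onto_comm_ideal f \<longleftrightarrow> bij_betw f UNIV (comm_ideal :: 'b set) \<and>
     (\<forall>x y. f (x + y) = f x + f y \<and> f (x * y) = f x * f y)"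

end

theory Submission
  imports Defs
begin

text \<open>Identify R with I = [S,S]. For an ideal J of S, products ab with a, b in J are central
modulo the S-ideal K generated by the commutators of J, because [ab,s] = [a,bs] + [b,sa];
consequently J^3 [S,S] \<subseteq> K, and I K I lies in the I-ideal generated by the commutators of J.
With J = I^(m+1) this shows that I^(m+1) \<subseteq> T implies I^(3m+6) \<subseteq> (I-ideal generated by [T,T]),
so by induction every term delta^(n)(R) of the derived series contains a power of R, and
delta^(n)(R) = 0 forces R^k = 0. A commutative ring has delta^(1) = 0, while a nonzero unital
ring is never nilpotent.\<close>

definition commutators :: "'a::ring set \<Rightarrow> 'a set" where
  "commutators X = {a * b - b * a | a b. a \<in> X \<and> b \<in> X}"

text \<open>An ideal without the additive closure: the powers of an ideal, as sets of products, are
of this kind.\<close>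

definition mult_absorbing :: "'a::ring set \<Rightarrow> bool" where
  "mult_absorbing J \<longleftrightarrow> (\<forall>a\<in>J. \<forall>s. s * a \<in> J \<and> a * s \<in> J)"

inductive_set ideal_gen_within :: "'a::ring set \<Rightarrow> 'a set \<Rightarrow> 'a set" for I X :: "'a set" where
  base: "a \<in> X \<Longrightarrow> a \<in> ideal_gen_within I X"
| zero: "0 \<in> ideal_gen_within I X"
| diff: "x \<in> ideal_gen_within I X \<Longrightarrow> y \<in> ideal_gen_within I X
    \<Longrightarrow> x - y \<in> ideal_gen_within I X"
| lmult: "x \<in> ideal_gen_within I X \<Longrightarrow> r \<in> I \<Longrightarrow> r * x \<in> ideal_gen_within I X"
| rmult: "x \<in> ideal_gen_within I X \<Longrightarrow> r \<in> I \<Longrightarrow> x * r \<in> ideal_gen_within I X"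

text \<open>set_power X k consists of the products of k+1 elements of X, matching the indexing of prodn.\<close>

fun set_power :: "'a::ring set \<Rightarrow> nat \<Rightarrow> 'a set" where
  "set_power X 0 = X"
| "set_power X (Suc k) = {a * b | a b. a \<in> set_power X k \<and> b \<in> X}"

lemma ideal_gen_add: "x \<in> ideal_gen A \<Longrightarrow> y \<in> ideal_gen A \<Longrightarrow> x + y \<in> ideal_gen A"
  using ideal_gen.diff[OF _ ideal_gen.diff[OF ideal_gen.zero]] by fastforce

lemma commutator_in_ideal_gen_commutators:
  "a \<in> J \<Longrightarrow> b \<in> J \<Longrightarrow> a * b - b * a \<in> ideal_gen (commutators J)"
  by (rule ideal_gen.base) (auto simp: commutators_def)

lemma delta_Suc_eq: "delta (Suc n) = ideal_gen (commutators (delta n))"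
  by (simp add: commutators_def)

lemma mult_absorbing_comm_ideal: "mult_absorbing comm_ideal"
  unfolding mult_absorbing_def comm_ideal_def by (auto intro: ideal_gen.lmult ideal_gen.rmult)

lemma prod_central_modulo_commutators:
  assumes J: "mult_absorbing J" and "a \<in> J" "b \<in> J"
  shows "a * b * s - s * (a * b) \<in> ideal_gen (commutators J)"
proof -
  have "b * s \<in> J" "s * a \<in> J" using assms unfolding mult_absorbing_def by blast+
  then have "a * (b * s) - b * s * a \<in> ideal_gen (commutators J)"
    and "s * a * b - b * (s * a) \<in> ideal_gen (commutators J)"
    using assms by (auto intro: commutator_in_ideal_gen_commutators)
  from ideal_gen.diff[OF this] show ?thesis by (simp add: algebra_simps)
qed

lemma mult_swap_modulo_commutators:
  assumes J: "mult_absorbing J" and "a \<in> J" "b \<in> J"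
  shows "a * s * b - a * b * s \<in> ideal_gen (commutators J)"
proof -
  have "a * s \<in> J" using assms unfolding mult_absorbing_def by blast
  then have "a * s * b - b * (a * s) \<in> ideal_gen (commutators J)"
    and "(b * a - a * b) * s \<in> ideal_gen (commutators J)"
    using assms by (auto intro: commutator_in_ideal_gen_commutators ideal_gen.rmult)
  from ideal_gen_add[OF this] show ?thesis by (simp add: algebra_simps)
qed

lemma prod_mult_commutator_in_ideal_gen_commutators:
  assumes J: "mult_absorbing J" and a: "a \<in> J" and b: "b \<in> J" and c: "c \<in> J"
  shows "a * b * c * (x * y - y * x) \<in> ideal_gen (commutators J)"
proof -
  let ?K = "ideal_gen (commutators J)" and ?p = "a * b"
  have "?p * y \<in> J" using a b J unfolding mult_absorbing_def by blast
  then have swap: "c * x * (?p * y) - c * (?p * y) * x \<in> ?K"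
    by (rule mult_swap_modulo_commutators[OF J c])
  have central: "c * (?p * x - x * ?p) * y \<in> ?K"
    using prod_central_modulo_commutators[OF J a b] by (intro ideal_gen.lmult ideal_gen.rmult)
  from ideal_gen_add[OF swap central] have "c * ?p * (x * y - y * x) \<in> ?K"
    by (simp add: algebra_simps)
  moreover have "(?p * c - c * ?p) * (x * y - y * x) \<in> ?K"
    using prod_central_modulo_commutators[OF J a b] by (intro ideal_gen.rmult)
  ultimately have "(?p * c - c * ?p) * (x * y - y * x) + c * ?p * (x * y - y * x) \<in> ?K"
    by (simp add: ideal_gen_add)
  then show ?thesis by (simp add: algebra_simps)
qed

lemma prod_mult_comm_ideal_in_ideal_gen_commutators:
  assumes J: "mult_absorbing J" and "a \<in> J" "b \<in> J" "c \<in> J" and z: "z \<in> comm_ideal"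
  shows "a * b * c * z \<in> ideal_gen (commutators J)"
  using z[unfolded comm_ideal_def] \<open>c \<in> J\<close>
proof (induction arbitrary: c)
  case (base t)
  then show ?case
    using prod_mult_commutator_in_ideal_gen_commutators[OF J \<open>a \<in> J\<close> \<open>b \<in> J\<close>] by blast
next
  case zero
  then show ?case by (simp add: ideal_gen.zero)
next
  case (diff x y)
  then show ?case using ideal_gen.diff[of "a * b * c * x" _ "a * b * c * y"]
    by (simp add: algebra_simps)
next
  case (lmult x r)
  then have "c * r \<in> J" using J unfolding mult_absorbing_def by blast
  then show ?case using lmult.IH[OF \<open>c * r \<in> J\<close>] by (simp add: mult.assoc)
next
  case (rmult x r)
  then show ?case using ideal_gen.rmult[of "a * b * c * x"] by (simp add: mult.assoc)
qed

lemma sandwich_ideal_gen_in_ideal_gen_within: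
  assumes I: "mult_absorbing I" and v: "v \<in> ideal_gen X" and "u \<in> I" "w \<in> I"
  shows "u * v * w \<in> ideal_gen_within I X"
  using v \<open>u \<in> I\<close> \<open>w \<in> I\<close>
proof (induction arbitrary: u w)
  case (base a)
  then show ?case by (intro ideal_gen_within.intros)
next
  case zero
  then show ?case by (simp add: ideal_gen_within.zero)
next
  case (diff x y)
  then show ?case using ideal_gen_within.diff[of "u * x * w" _ _ "u * y * w"]
    by (simp add: algebra_simps)
next
  case (lmult x r)
  then have "u * r \<in> I" using I unfolding mult_absorbing_def by blast
  then show ?case using lmult.IH[of "u * r" w] lmult.prems by (simp add: mult.assoc)
next
  case (rmult x r)
  then have "r * w \<in> I" using I unfolding mult_absorbing_def by blast
  then show ?case using rmult.IH[of u "r * w"] rmult.prems by (simp add: mult.assoc)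
qed

lemma set_power_split:
  "n = j + k + 1 \<Longrightarrow> z \<in> set_power X n
    \<Longrightarrow> \<exists>a b. a \<in> set_power X j \<and> b \<in> set_power X k \<and> z = a * b"
proof (induction k arbitrary: n z)
  case 0
  then show ?case by (simp; blast)
next
  case (Suc k)
  then obtain z' c where z: "z = z' * c" "z' \<in> set_power X (j + k + 1)" "c \<in> X"
    by (simp; blast)
  with Suc.IH obtain a b where "a \<in> set_power X j" "b \<in> set_power X k" "z' = a * b" by blast
  moreover have "b * c \<in> set_power X (Suc k)" using \<open>b \<in> set_power X k\<close> z(3) by auto
  ultimately show ?case using z(1) by (metis mult.assoc)
qed

lemma mult_absorbing_set_power: "mult_absorbing X \<Longrightarrow> mult_absorbing (set_power X k)"
proof (induction k)
  case 0
  then show ?case by simp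
next
  case (Suc k)
  show ?case unfolding mult_absorbing_def
  proof (intro ballI allI conjI)
    fix z s assume "z \<in> set_power X (Suc k)"
    then obtain a c where z: "z = a * c" "a \<in> set_power X k" "c \<in> X" by auto
    then have "s * a \<in> set_power X k" "c * s \<in> X"
      using Suc unfolding mult_absorbing_def by blast+
    moreover have "s * z = (s * a) * c" "z * s = a * (c * s)"
      using z(1) by (simp_all add: mult.assoc)
    ultimately show "s * z \<in> set_power X (Suc k)" "z * s \<in> set_power X (Suc k)"
      using z(2,3) by auto
  qed
qed

lemma set_power_comm_ideal_step:
  assumes T: "set_power (comm_ideal :: 'a::ring set) m \<subseteq> T"
  shows "set_power comm_ideal (3 * m + 5) \<subseteq> ideal_gen_within comm_ideal (commutators T)"
proof
  let ?I = "comm_ideal :: 'a set" and ?J = "set_power comm_ideal m"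
  have absI: "mult_absorbing ?I" by (rule mult_absorbing_comm_ideal)
  fix z assume "z \<in> set_power ?I (3 * m + 5)"
  then have "\<exists>u v'. u \<in> set_power ?I 0 \<and> v' \<in> set_power ?I (Suc (3 * m + 3)) \<and> z = u * v'"
    by (rule set_power_split[rotated]) simp
  then obtain u v w where z: "z = u * v * w" "u \<in> ?I" "w \<in> ?I"
    and v: "v \<in> set_power ?I (3 * m + 3)"
    unfolding set_power.simps by (blast intro: mult.assoc[symmetric])
  have "\<exists>e d. e \<in> set_power ?I (m + (2 * m + 1) + 1) \<and> d \<in> set_power ?I 0 \<and> v = e * d"
    by (rule set_power_split[OF _ v]) simp
  then obtain e d where e: "e \<in> set_power ?I (m + (2 * m + 1) + 1)" and "d \<in> ?I" "v = e * d"
    unfolding set_power.simps(1) by blast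
  obtain a e' where "a \<in> ?J" "e' \<in> set_power ?I (2 * m + 1)" "e = a * e'"
    using set_power_split[OF refl e] by blast
  moreover obtain b c where "b \<in> ?J" "c \<in> ?J" "e' = b * c"
    using set_power_split[OF _ calculation(2), of m m] by auto
  ultimately have "v \<in> ideal_gen (commutators ?J)"
    using prod_mult_comm_ideal_in_ideal_gen_commutators[OF mult_absorbing_set_power[OF absI]]
      \<open>d \<in> ?I\<close> \<open>v = e * d\<close> by (simp add: mult.assoc)
  moreover have "ideal_gen_within ?I (commutators ?J) \<subseteq> ideal_gen_within ?I (commutators T)"
  proof
    fix x assume "x \<in> ideal_gen_within ?I (commutators ?J)"
    then show "x \<in> ideal_gen_within ?I (commutators T)"
      by induction (use T in \<open>auto simp: commutators_def intro: ideal_gen_within.intros\<close>)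
  qed
  ultimately show "z \<in> ideal_gen_within ?I (commutators T)"
    using sandwich_ideal_gen_in_ideal_gen_within[OF absI] z by blast
qed

lemma iso_onto_comm_ideal_D:
  assumes "iso_onto_comm_ideal f"
  shows "f (x - y) = f x - f y" "f (x * y) = f x * f y" "range f = comm_ideal" "inj f"
proof -
  have add: "\<And>x y. f (x + y) = f x + f y" and "bij_betw f UNIV comm_ideal"
    using assms unfolding iso_onto_comm_ideal_def by auto
  then show "range f = comm_ideal" "inj f" by (auto simp: bij_betw_def)
  show "f (x - y) = f x - f y" by (metis add add_diff_cancel diff_add_cancel)
  show "f (x * y) = f x * f y" using assms unfolding iso_onto_comm_ideal_def by blast
qed

lemma ideal_gen_within_range_subset_image:
  fixes f :: "'a::ring \<Rightarrow> 'b::ring"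
  assumes diff: "\<And>x y. f (x - y) = f x - f y" and mult: "\<And>x y. f (x * y) = f x * f y"
  shows "ideal_gen_within (range f) (f ` A) \<subseteq> f ` ideal_gen A"
proof
  fix z assume "z \<in> ideal_gen_within (range f) (f ` A)"
  then show "z \<in> f ` ideal_gen A"
  proof induction
    case zero
    have "f 0 = 0" using diff[of 0 0] by simp
    then show ?case using ideal_gen.zero by force
  qed (auto simp flip: diff mult intro: ideal_gen.intros)
qed

lemma image_commutators:
  assumes "\<And>x y. f (x - y) = f x - f y" and "\<And>x y. f (x * y) = f x * f y"
  shows "f ` commutators X = commutators (f ` X)"
  unfolding commutators_def by (force simp: assms)

lemma image_prodn_in_set_power:
  assumes "\<And>x y. f (x * y) = f x * f y"
  shows "f (prodn x k) \<in> set_power (range f) k"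
  by (induction k) (auto simp: assms)

lemma set_power_comm_ideal_subset_image_delta:
  assumes iso: "iso_onto_comm_ideal f"
  shows "\<exists>m. set_power comm_ideal m \<subseteq> f ` delta n"
proof (induction n)
  case 0
  show ?case using iso_onto_comm_ideal_D(3)[OF iso] by (auto intro: exI[of _ 0])
next
  case (Suc n)
  note hom = iso_onto_comm_ideal_D(1,2)[OF iso]
  from Suc obtain m where "set_power comm_ideal m \<subseteq> f ` delta n" by blast
  then have "set_power comm_ideal (3 * m + 5)
      \<subseteq> ideal_gen_within comm_ideal (commutators (f ` delta n))"
    by (rule set_power_comm_ideal_step)
  also have "\<dots> = ideal_gen_within (range f) (f ` commutators (delta n))"
    using iso_onto_comm_ideal_D(3)[OF iso] image_commutators[OF hom] by simp
  also have "\<dots> \<subseteq> f ` delta (Suc n)"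
    unfolding delta_Suc_eq by (rule ideal_gen_within_range_subset_image[OF hom])
  finally show ?case by blast
qed

lemma solvable_iso_comm_ideal_imp_nilpotent:
  assumes "solvable_ring TYPE('a::ring)" and iso: "iso_onto_comm_ideal (f :: 'a \<Rightarrow> 'b::ring)"
  shows "nilpotent_ring TYPE('a)"
proof -
  obtain n where "delta n = ({0} :: 'a set)" using assms(1) unfolding solvable_ring_def by blast
  moreover obtain m where "set_power comm_ideal m \<subseteq> f ` delta n"
    using set_power_comm_ideal_subset_image_delta[OF iso] by blast
  ultimately have "f (prodn x m) = f 0" for x
    using image_prodn_in_set_power[OF iso_onto_comm_ideal_D(2)[OF iso], of x m]
      iso_onto_comm_ideal_D(3)[OF iso] by auto
  then have "prodn x m = 0" for x :: "nat \<Rightarrow> 'a"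
    using iso_onto_comm_ideal_D(4)[OF iso] by (simp add: inj_eq)
  then show ?thesis unfolding nilpotent_ring_def by blast
qed

lemma solvable_ring_comm: "solvable_ring TYPE('a::comm_ring)"
proof -
  have "commutators (UNIV :: 'a set) = {0}" by (auto simp: commutators_def mult.commute)
  moreover have "ideal_gen {0 :: 'a} = {0}"
    using ideal_gen.zero by (auto elim: ideal_gen.induct)
  ultimately have "delta 1 = ({0} :: 'a set)" by (simp add: delta_Suc_eq[of 0, simplified])
  then show ?thesis unfolding solvable_ring_def by blast
qed

lemma nilpotent_ring_1_imp_trivial:
  assumes "nilpotent_ring TYPE('a::ring_1)" shows "(1 :: 'a) = 0"
proof -
  have "prodn (\<lambda>_. 1 :: 'a) k = 1" for k by (induction k) auto
  then show ?thesis using assms unfolding nilpotent_ring_def by metis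
qed

theorem proposition5p4:
  shows "(solvable_ring TYPE('a::ring) \<and> (\<exists>f :: 'a \<Rightarrow> 'b::ring. iso_onto_comm_ideal f)
            \<longrightarrow> nilpotent_ring TYPE('a))
       \<and> ((1::'c::comm_ring_1) \<noteq> 0 \<longrightarrow> \<not> (\<exists>g :: 'c \<Rightarrow> 'd::ring. iso_onto_comm_ideal g))"
  using solvable_iso_comm_ideal_imp_nilpotent[where 'b = 'b] solvable_ring_comm
    solvable_iso_comm_ideal_imp_nilpotent[where 'a = 'c and 'b = 'd] nilpotent_ring_1_imp_trivial
  by blast

end
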